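(* Let $n$ be a positive integer and $N = n^2+n+1$. The equation $a^2+ab+b^2 = N$ has a solution in positive integers $(a,b)$ with $(a,b) \notin \{(n,1),(1,n)\}$ if and only if $N$ is neither a prime nor three times a prime. *)

theory Defs
  imports "HOL-Computational_Algebra.Primes"
begin

end

theory Submission
  imports Defs "HOL-Library.Discrete_Functions" "HOL-Number_Theory.Cong"
begin

text \<open>
  Write \<open>Q(x, y) = x\<^sup>2 + xy + y\<^sup>2\<close>, the norm of the Eisenstein integer \<open>x - y\<omega>\<close>, so that
  \<open>N = n\<^sup>2 + n + 1 = Q(n, 1)\<close>.

  If \<open>N = mP\<close> with \<open>P\<close> prime and \<open>m \<in> {1, 3}\<close>, a representation \<open>N = Q(a, b)\<close> gives
  \<open>P | (a - nb)(a + (n + 1)b)\<close>. In the first case, multiplying \<open>a - b\<omega>\<close> by the conjugate of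
  \<open>n - \<omega>\<close> gives a vector \<open>(u, w)\<close> with \<open>Q(u, w) = N\<^sup>2\<close> and both coordinates divisible by \<open>P\<close>;
  then \<open>Q(u/P, w/P) = m\<^sup>2\<close> has only the six trivial solutions, so \<open>(a, b)\<close> is an associate of
  \<open>(n, 1)\<close>. The second case is the first one with \<open>a\<close> and \<open>b\<close> exchanged.

  Conversely, if \<open>N\<close> is neither a prime nor three times a prime, then either \<open>N = s\<^sup>2m\<close> with
  \<open>s > 1\<close>, and a representation of \<open>m\<close> from Thue's lemma, scaled by \<open>s\<close>, is neither \<open>(n, 1)\<close>
  nor \<open>(1, n)\<close>; or \<open>N = de\<close> with coprime \<open>d, e\<close> not dividing 3. In the latter case Thue's lemma,
  applied to the root \<open>t\<close> of \<open>t\<^sup>2 + t + 1\<close> modulo \<open>N\<close> with \<open>t \<equiv> -1 - n (mod d)\<close> and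
  \<open>t \<equiv> n (mod e)\<close>, yields a representation \<open>(a, b)\<close> with \<open>a \<equiv> tb (mod N)\<close>. Since \<open>(n, 1)\<close> and
  \<open>(1, n)\<close> lie on the lattices of the roots \<open>n\<close> and \<open>-1 - n\<close>, this representation is new.
\<close>

text \<open>\<open>(x, y)\<close> stands for \<open>x - y\<omega>\<close>; its associates are its products with the six units.\<close>

fun associates :: "int \<times> int \<Rightarrow> (int \<times> int) set" where
  "associates (x, y) = {(x, y), (-y, x + y), (-x - y, x), (-x, -y), (y, -x - y), (x + y, -x)}"

lemma associates_norm:
  assumes "(x', y') \<in> associates (x, y)"
  shows "x'^2 + x'*y' + y'^2 = x^2 + x*y + y^2"
  using assms by auto (simp_all add: algebra_simps power2_eq_square)

lemma associates_dvd:
  assumes "(x', y') \<in> associates (x, y)" and "s dvd x" and "s dvd y"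
  shows "s dvd x' \<and> s dvd y'"
  using assms by auto

lemma associates_dvd_diff:
  assumes "(x', y') \<in> associates (x, y)" and "q dvd t^2 + t + 1" and "q dvd x - t*y"
  shows "q dvd x' - t*y'"
proof -
  let ?e = "x - t*y" and ?f = "t^2 + t + 1"
  have "x' - t*y' \<in> {?e, -?e, -t*?e - y*?f, t*?e + y*?f, -(1 + t)*?e - y*?f, (1 + t)*?e + y*?f}"
    using assms(1) by auto (simp_all add: algebra_simps power2_eq_square)
  then show ?thesis
    using assms(2,3) by (auto simp: dvd_diff_commute)
qed

lemma associates_scale:
  "associates (m*a, m*b) = (\<lambda>(x, y). (m*x, m*y)) ` associates (a, b)"
  by (simp add: algebra_simps)

lemma associate_in_first_sector:
  assumes "(x, y) \<noteq> (0, 0)"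
  obtains a b where "(a, b) \<in> associates (x, y)" and "a > 0" and "b \<ge> 0"
proof -
  have "x > 0 \<and> y \<ge> 0 \<or> y < 0 \<and> x + y \<ge> 0 \<or> x + y < 0 \<and> x \<ge> 0 \<or> x < 0 \<and> y \<le> 0
    \<or> y > 0 \<and> x + y \<le> 0 \<or> x + y > 0 \<and> x \<le> 0"
    using assms by auto
  then show ?thesis
    using that by (elim disjE) auto
qed

lemma norm_form_pos:
  fixes x y :: int
  assumes "(x, y) \<noteq> (0, 0)"
  shows "x^2 + x*y + y^2 > 0"
proof -
  have "4*(x^2 + x*y + y^2) = (2*x + y)^2 + 3*y^2"
    by (simp add: algebra_simps power2_eq_square)
  moreover have "(2*x + y)^2 + 3*y^2 > 0"
    using assms by (smt (verit) power2_less_eq_zero_iff zero_le_power2 prod.inject)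
  ultimately show ?thesis
    by simp
qed

lemma even_norm_form_iff:
  fixes x y :: int
  shows "even (x^2 + x*y + y^2) \<longleftrightarrow> even x \<and> even y"
  by (cases "even x"; cases "even y") (auto simp: power2_eq_square)

lemma norm_form_eq_small_square:
  fixes x y m :: int
  assumes "x^2 + x*y + y^2 = m^2" and "m = 1 \<or> m = 3"
  shows "(x, y) \<in> associates (m, 0)"
proof -
  have "(2*x + y)^2 + 3*y^2 = 4*m^2" and "(2*y + x)^2 + 3*x^2 = 4*m^2"
    using assms(1) by (simp_all add: algebra_simps power2_eq_square)
  moreover have "4*m^2 \<le> 36"
    using assms(2) by auto
  moreover have "(2*x + y)^2 \<ge> 0" and "(2*y + x)^2 \<ge> 0"
    by simp_all
  ultimately have "x^2 < 16" and "y^2 < 16"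
    by linarith+
  then have "\<bar>x\<bar> < 4" and "\<bar>y\<bar> < 4"
    using abs_le_square_iff[of 4 x] abs_le_square_iff[of 4 y] by auto
  then have "x \<in> {-3, -2, -1, 0, 1, 2, 3}" and "y \<in> {-3, -2, -1, 0, 1, 2, 3}"
    by auto
  then show ?thesis
    using assms by (elim insertE emptyE disjE) (simp_all add: power2_eq_square)
qed

lemma positive_associate:
  fixes x y N :: int
  assumes "x^2 + x*y + y^2 = N" and "\<And>k. k^2 \<noteq> N"
  obtains a b where "(a, b) \<in> associates (x, y)" and "a > 0" and "b > 0"
proof -
  have "(x, y) \<noteq> (0, 0)"
    using assms by force
  then obtain a b where ab: "(a, b) \<in> associates (x, y)" "a > 0" "b \<ge> 0"
    using associate_in_first_sector by blast
  have "b \<noteq> 0"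
    using associates_norm[OF ab(1)] assms by force
  then show ?thesis
    using that ab by simp
qed

lemma not_square_n2_n_1:
  fixes n k :: int
  assumes "n > 0"
  shows "k^2 \<noteq> n^2 + n + 1"
proof
  assume k: "k^2 = n^2 + n + 1"
  show False
  proof (cases "\<bar>k\<bar> \<le> n")
    case True
    then have "k^2 \<le> n^2"
      using abs_le_square_iff[of k n] assms by simp
    then show False
      using k assms by simp
  next
    case False
    then have "(n + 1)^2 \<le> k^2"
      using abs_le_square_iff[of "n + 1" k] assms by simp
    then show False
      using k assms by (simp add: power2_eq_square algebra_simps)
  qed
qed

lemma int_floor_sqrt_bounds:
  fixes m :: int
  assumes "m \<ge> 0"
  obtains K where "K \<ge> 0" and "K^2 \<le> m" and "m < (K + 1)^2"
proof
  let ?K = "int (floor_sqrt (nat m))"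
  show "?K \<ge> 0"
    by simp
  have "int ((floor_sqrt (nat m))^2) \<le> int (nat m)"
    using floor_sqrt_power2_le of_nat_le_iff by blast
  then show "?K^2 \<le> m"
    using assms by simp
  have "int (nat m) < int ((Suc (floor_sqrt (nat m)))^2)"
    using Suc_floor_sqrt_power2_gt of_nat_less_iff by blast
  then show "m < (?K + 1)^2"
    using assms by (simp add: add.commute)
qed

lemma small_solution_of_linear_congruence:
  fixes m t K :: int
  assumes "m > 0" and "K \<ge> 0" and "m < (K + 1)^2"
  obtains x y where "(x, y) \<noteq> (0, 0)" and "\<bar>x\<bar> \<le> K" and "\<bar>y\<bar> \<le> K" and "m dvd x - t*y"
proof -
  define A where "A = {0..K} \<times> {0..K}"
  define g where "g = (\<lambda>(x, y). (x - t*y) mod m)"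
  have "card (g ` A) \<le> card {0..<m}"
    using assms(1) by (intro card_mono) (auto simp: g_def)
  also have "card {0..<m} < card A"
    using assms by (simp add: A_def card_cartesian_product power2_eq_square nat_mult_distrib[symmetric])
  finally have "\<not> inj_on g A"
    by (intro pigeonhole) (simp add: A_def)
  then obtain x1 y1 x2 y2 where
    in_A: "(x1, y1) \<in> A" "(x2, y2) \<in> A" and "(x1, y1) \<noteq> (x2, y2)" and "g (x1, y1) = g (x2, y2)"
    unfolding inj_on_def by auto
  moreover from \<open>g (x1, y1) = g (x2, y2)\<close> have "m dvd (x1 - x2) - t*(y1 - y2)"
    by (simp add: g_def mod_eq_dvd_iff algebra_simps)
  moreover have "\<bar>x1 - x2\<bar> \<le> K" and "\<bar>y1 - y2\<bar> \<le> K"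
    using in_A by (auto simp: A_def)
  ultimately show ?thesis
    using that[of "x1 - x2" "y1 - y2"] by auto
qed

lemma norm_form_eq_if_short_multiple:
  fixes x y m K :: int
  assumes "(x, y) \<noteq> (0, 0)" and "\<bar>x\<bar> \<le> K" and "\<bar>y\<bar> \<le> K" and "K^2 < m" and "odd m"
    and "m dvd x^2 + x*y + y^2"
  shows "x^2 + x*y + y^2 = m"
proof -
  define q where "q = x^2 + x*y + y^2"
  obtain k where k: "q = m*k"
    using assms(6) unfolding q_def ..
  have "m > 0"
    using assms(4) by (smt (verit) zero_le_power2)
  moreover have "q > 0"
    unfolding q_def using norm_form_pos[OF assms(1)] .
  ultimately have "k > 0"
    using k by (simp add: zero_less_mult_iff)
  have "x*y \<le> K^2"
    using assms(2,3) abs_mult[of x y] mult_mono[of "\<bar>x\<bar>" K "\<bar>y\<bar>" K]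
    by (simp add: power2_eq_square)
  moreover have "x^2 \<le> K^2" and "y^2 \<le> K^2"
    using assms(2,3) abs_le_square_iff[of x K] abs_le_square_iff[of y K] by simp_all
  ultimately have "m*k < m*3"
    using k assms(4) unfolding q_def by linarith
  then have "k = 1 \<or> k = 2"
    using \<open>k > 0\<close> \<open>m > 0\<close> by auto
  moreover have "k \<noteq> 2"
  proof
    assume "k = 2"
    then have "even x \<and> even y"
      using k even_norm_form_iff unfolding q_def by (metis dvd_triv_right)
    then have "4 dvd q"
      unfolding q_def by (auto simp: power2_eq_square elim!: evenE)
    then show False
      using k \<open>k = 2\<close> \<open>odd m\<close> by auto
  qed
  ultimately show ?thesis
    using k unfolding q_def by auto
qed

lemma norm_form_representation_of_root:
  fixes m t :: int
  assumes "m > 0" and "odd m" and "m dvd t^2 + t + 1" and "\<And>k. k^2 \<noteq> m"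
  obtains x y where "x^2 + x*y + y^2 = m" and "m dvd x - t*y"
proof -
  obtain K where K: "K \<ge> 0" "K^2 < m" "m < (K + 1)^2"
    using int_floor_sqrt_bounds[of m] assms(1,4) by (metis order_le_less)
  obtain x y where xy: "(x, y) \<noteq> (0, 0)" "\<bar>x\<bar> \<le> K" "\<bar>y\<bar> \<le> K" and "m dvd x - t*y"
    using small_solution_of_linear_congruence[OF assms(1) K(1,3)] by blast
  moreover have "x^2 + x*y + y^2 = y^2*(t^2 + t + 1) + (x - t*y)*(x + t*y + y)"
    by (simp add: algebra_simps power2_eq_square)
  then have "m dvd x^2 + x*y + y^2"
    using \<open>m dvd x - t*y\<close> assms(3) by simp
  ultimately show ?thesis
    using that norm_form_eq_if_short_multiple K(2) assms(2) by blast
qed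

lemma associate_of_multiple_of_prime:
  fixes u w m P :: int
  assumes norm: "u^2 + u*w + w^2 = (m*P)^2" and "prime P" and "P dvd w" and m: "m = 1 \<or> m = 3"
  shows "(u, w) \<in> associates (m*P, 0)"
proof -
  have "u^2 = (m*P)^2 - w*(u + w)"
    using norm by (simp add: algebra_simps power2_eq_square)
  then have "P dvd u^2"
    using \<open>P dvd w\<close> by (simp add: power_mult_distrib)
  then have "P dvd u"
    using \<open>prime P\<close> prime_dvd_power by blast
  then obtain u' w' where u': "u = P*u'" and w': "w = P*w'"
    using \<open>P dvd w\<close> by (auto elim!: dvdE)
  have "P^2*(u'^2 + u'*w' + w'^2) = P^2*m^2"
    using norm unfolding u' w' by (simp add: algebra_simps power2_eq_square)
  then have "u'^2 + u'*w' + w'^2 = m^2"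
    using \<open>prime P\<close> by auto
  then have "(u', w') \<in> associates (m, 0)"
    using norm_form_eq_small_square m by blast
  then have "(u, w) \<in> associates (P*m, P*0)"
    unfolding associates_scale u' w' by (rule rev_image_eqI) simp
  then show ?thesis
    by (simp add: mult.commute)
qed

lemma associate_of_n_1_if_prime_dvd:
  fixes n x y m P :: int
  assumes norm: "x^2 + x*y + y^2 = n^2 + n + 1" and N: "n^2 + n + 1 = m*P"
    and "prime P" and m: "m = 1 \<or> m = 3" and "P dvd x - n*y"
  shows "(x, y) \<in> associates (n, 1)"
proof -
  \<comment> \<open>\<open>(u, w)\<close> stands for \<open>(x - y\<omega>)(n + 1 + \<omega>)\<close>, and \<open>n + 1 + \<omega>\<close> is the conjugate of \<open>n - \<omega>\<close>.\<close>
  define u where "u = (n + 1)*x + y"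
  define w where "w = n*y - x"
  have "u^2 + u*w + w^2 = (x^2 + x*y + y^2)*(n^2 + n + 1)"
    unfolding u_def w_def by (simp add: algebra_simps power2_eq_square)
  then have "u^2 + u*w + w^2 = (m*P)^2"
    using norm N by (simp add: power2_eq_square)
  moreover have "P dvd w"
    using \<open>P dvd x - n*y\<close> unfolding w_def by (simp add: dvd_diff_commute)
  ultimately have "(u, w) \<in> associates ((m*P)*1, (m*P)*0)"
    using associate_of_multiple_of_prime \<open>prime P\<close> m by simp
  then obtain e1 e2 where e: "(e1, e2) \<in> associates (1, 0)" and "u = m*P*e1" and "w = m*P*e2"
    unfolding associates_scale by (auto simp del: associates.simps)
  moreover have "(m*P)*x = n*u - w" and "(m*P)*y = u + (n + 1)*w"
    unfolding N[symmetric] u_def w_def by (simp_all add: algebra_simps power2_eq_square)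
  ultimately have "(m*P)*x = (m*P)*(n*e1 - e2)" and "(m*P)*y = (m*P)*(e1 + (n + 1)*e2)"
    by (simp_all add: algebra_simps)
  moreover have "m*P \<noteq> 0"
    using N norm_form_pos[of n 1] by auto
  ultimately have "(x, y) = (n*e1 - e2, e1 + (n + 1)*e2)"
    by simp
  moreover have "(e1, e2) \<in> {(1, 0), (0, 1), (-1, 1), (-1, 0), (0, -1), (1, -1)}"
    using e by simp
  ultimately show ?thesis
    by (elim insertE emptyE) (simp_all add: algebra_simps)
qed

lemma positive_representation_unique:
  fixes n a b m P :: int
  assumes "n > 0" and "a > 0" and "b > 0" and norm: "a^2 + a*b + b^2 = n^2 + n + 1"
    and N: "n^2 + n + 1 = m*P" and "prime P" and m: "m = 1 \<or> m = 3"
  shows "(a, b) = (n, 1) \<or> (a, b) = (1, n)"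
proof -
  have positive_associate_n_1: "(x, y) = (n, 1)" if "(x, y) \<in> associates (n, 1)" "x > 0" "y > 0" for x y
    using that \<open>n > 0\<close> by auto
  have "(a - n*b)*(a + (n + 1)*b) = (a^2 + a*b + b^2) - (n^2 + n + 1)*b^2"
    by (simp add: algebra_simps power2_eq_square)
  then have "P dvd (a - n*b)*(a + (n + 1)*b)"
    using norm N by simp
  then consider "P dvd a - n*b" | "P dvd a + (n + 1)*b"
    using \<open>prime P\<close> prime_dvd_mult_iff by blast
  then show ?thesis
  proof cases
    case 1
    then have "(a, b) \<in> associates (n, 1)"
      using associate_of_n_1_if_prime_dvd norm N \<open>prime P\<close> m by blast
    then show ?thesis
      using positive_associate_n_1 \<open>a > 0\<close> \<open>b > 0\<close> by blast
  next
    case 2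
    have "b - n*a = (n^2 + n + 1)*b - n*(a + (n + 1)*b)"
      by (simp add: algebra_simps power2_eq_square)
    then have "P dvd b - n*a"
      using 2 N by simp
    moreover have "b^2 + b*a + a^2 = n^2 + n + 1"
      using norm by (simp add: algebra_simps)
    ultimately have "(b, a) \<in> associates (n, 1)"
      using associate_of_n_1_if_prime_dvd N \<open>prime P\<close> m by blast
    then show ?thesis
      using positive_associate_n_1 \<open>a > 0\<close> \<open>b > 0\<close> by blast
  qed
qed

lemma other_representation_of_square_divisor:
  fixes n s :: int
  assumes "n > 0" and "s > 1" and "s^2 dvd n^2 + n + 1"
  obtains a b where "a > 0" and "b > 0" and "a^2 + a*b + b^2 = n^2 + n + 1"
    and "(a, b) \<notin> {(n, 1), (1, n)}"
proof -
  obtain m where N: "n^2 + n + 1 = s^2*m"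
    using assms(3) ..
  have "n^2 + n + 1 > 0"
    using assms(1) by (simp add: add_pos_pos)
  then have "m > 0"
    using N by (simp add: zero_less_mult_iff)
  have "odd (n^2 + n + 1)"
    by (simp add: power2_eq_square)
  then have "odd m"
    using N by simp
  have "m dvd n^2 + n + 1"
    using N by simp
  have "k^2 \<noteq> m" for k
    using not_square_n2_n_1[OF assms(1), of "s*k"] N by (auto simp: power_mult_distrib)
  then obtain x y where xy: "x^2 + x*y + y^2 = m"
    using norm_form_representation_of_root[OF \<open>m > 0\<close> \<open>odd m\<close> \<open>m dvd _\<close>] by blast
  have "(s*x)^2 + (s*x)*(s*y) + (s*y)^2 = s^2*(x^2 + x*y + y^2)"
    by (simp add: algebra_simps power2_eq_square)
  then have sxy: "(s*x)^2 + (s*x)*(s*y) + (s*y)^2 = n^2 + n + 1"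
    using N xy by simp
  then obtain a b where ab: "(a, b) \<in> associates (s*x, s*y)" "a > 0" "b > 0"
    using positive_associate[OF sxy not_square_n2_n_1[OF assms(1)]] by blast
  have "a^2 + a*b + b^2 = n^2 + n + 1"
    using associates_norm[OF ab(1)] sxy by simp
  moreover have "s dvd a" and "s dvd b"
    using associates_dvd[OF ab(1)] by simp_all
  then have "(a, b) \<notin> {(n, 1), (1, n)}"
    using assms(2) by auto
  ultimately show ?thesis
    using that ab(2,3) by blast
qed

lemma positive_representation_on_root_lattice:
  fixes n t :: int
  assumes "n > 0" and root: "n^2 + n + 1 dvd t^2 + t + 1"
  obtains a b where "a > 0" and "b > 0" and "a^2 + a*b + b^2 = n^2 + n + 1"
    and "n^2 + n + 1 dvd a - t*b"
proof -
  have "n^2 + n + 1 > 0"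
    using assms(1) by (simp add: add_pos_pos)
  moreover have "odd (n^2 + n + 1)"
    by (simp add: power2_eq_square)
  ultimately obtain x y where xy: "x^2 + x*y + y^2 = n^2 + n + 1" and "n^2 + n + 1 dvd x - t*y"
    using norm_form_representation_of_root[OF _ _ root not_square_n2_n_1[OF assms(1)]] by blast
  obtain a b where ab: "(a, b) \<in> associates (x, y)" "a > 0" "b > 0"
    using positive_associate[OF xy not_square_n2_n_1[OF assms(1)]] by blast
  have "a^2 + a*b + b^2 = n^2 + n + 1"
    using associates_norm[OF ab(1)] xy by simp
  moreover have "n^2 + n + 1 dvd a - t*b"
    using associates_dvd_diff[OF ab(1) root \<open>_ dvd x - t*y\<close>] .
  ultimately show ?thesis
    using that ab(2,3) by blast
qed

lemma root_from_coprime_factors: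
  fixes n d e :: int
  assumes N: "n^2 + n + 1 = d*e" and "coprime d e"
  obtains t where "n^2 + n + 1 dvd t^2 + t + 1" and "d dvd t + 1 + n" and "e dvd t - n"
proof -
  obtain t where "[t = -1 - n] (mod d)" and "[t = n] (mod e)"
    using binary_chinese_remainder_int[OF \<open>coprime d e\<close>] by blast
  then have td: "d dvd t + 1 + n" and te: "e dvd t - n"
    by (simp_all add: cong_iff_dvd_diff algebra_simps)
  have "t^2 + t + 1 = (n^2 + n + 1) + (t + 1 + n)*(t - n)"
    by (simp add: algebra_simps power2_eq_square)
  then have "d dvd t^2 + t + 1" and "e dvd t^2 + t + 1"
    using td te N by simp_all
  then have "n^2 + n + 1 dvd t^2 + t + 1"
    unfolding N using \<open>coprime d e\<close> by (simp add: divides_mult)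
  with td te show ?thesis
    using that by blast
qed

lemma other_representation_of_coprime_factors:
  fixes n d e :: int
  assumes "n > 0" and N: "n^2 + n + 1 = d*e" and "coprime d e"
    and "\<not> d dvd 3" and "\<not> e dvd 3"
  obtains a b where "a > 0" and "b > 0" and "a^2 + a*b + b^2 = n^2 + n + 1"
    and "(a, b) \<notin> {(n, 1), (1, n)}"
proof -
  obtain t where root: "n^2 + n + 1 dvd t^2 + t + 1" and td: "d dvd t + 1 + n" and te: "e dvd t - n"
    using root_from_coprime_factors[OF N \<open>coprime d e\<close>] by blast
  obtain a b where "a > 0" "b > 0" "a^2 + a*b + b^2 = n^2 + n + 1"
    and lattice: "n^2 + n + 1 dvd a - t*b"
    using positive_representation_on_root_lattice[OF \<open>n > 0\<close> root] by blast
  moreover have "(a, b) \<noteq> (n, 1)"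
  proof
    assume "(a, b) = (n, 1)"
    then have "d dvd n - t"
      using lattice N by (simp add: dvd_mult_left)
    then have "d dvd 2*n + 1"
      using td dvd_add[of d "n - t" "t + 1 + n"] by simp
    then have "d dvd 4*(n^2 + n + 1) - (2*n + 1)^2"
      unfolding N by (simp add: power2_eq_square)
    moreover have "4*(n^2 + n + 1) - (2*n + 1)^2 = 3"
      by (simp add: algebra_simps power2_eq_square)
    ultimately show False
      using \<open>\<not> d dvd 3\<close> by metis
  qed
  moreover have "(a, b) \<noteq> (1, n)"
  proof
    assume "(a, b) = (1, n)"
    then have "e dvd 1 - t*n"
      using lattice N by (simp add: dvd_mult_right)
    then have "e dvd (1 - t*n) + n*(t - n) + (n^2 + n + 1)"
      using te N by simp
    moreover have "(1 - t*n) + n*(t - n) + (n^2 + n + 1) = n + 2"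
      by (simp add: algebra_simps power2_eq_square)
    ultimately have "e dvd (n^2 + n + 1) - (n + 2)*(n - 1)"
      unfolding N by simp
    moreover have "(n^2 + n + 1) - (n + 2)*(n - 1) = 3"
      by (simp add: algebra_simps power2_eq_square)
    ultimately show False
      using \<open>\<not> e dvd 3\<close> by metis
  qed
  ultimately show ?thesis
    using that by blast
qed

lemma prime_factor_not_3_or_9_dvd:
  fixes N :: nat
  assumes "N > 1" and "\<not> prime N"
  obtains p where "prime p" and "p \<noteq> 3" and "p dvd N" | "3^2 dvd N"
proof (cases "3 dvd N")
  case False
  obtain p where "prime p" and "p dvd N"
    using prime_factor_nat[of N] assms(1) by auto
  with False that(1) show ?thesis
    by auto
next
  case True
  then obtain M where M: "N = 3*M" ..
  have "M \<noteq> 1"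
    using M assms(2) by auto
  then obtain p where "prime p" and "p dvd M"
    using prime_factor_nat by blast
  then show ?thesis
    using that M by (cases "p = 3") (auto simp: power2_eq_square)
qed

lemma square_divisor_or_coprime_factors:
  fixes N :: nat
  assumes "N > 1" and "\<not> prime N" and "\<not> (\<exists>p. prime p \<and> N = 3*p)"
  shows "(\<exists>s > 1. s^2 dvd N) \<or> (\<exists>d e. N = d*e \<and> coprime d e \<and> \<not> d dvd 3 \<and> \<not> e dvd 3)"
  using assms(1,2)
proof (cases rule: prime_factor_not_3_or_9_dvd)
  case (1 p)
  show ?thesis
  proof (cases "p^2 dvd N")
    case True
    then show ?thesis
      using \<open>prime p\<close> prime_gt_1_nat by blast
  next
    case False
    obtain e where N: "N = p*e"
      using \<open>p dvd N\<close> ..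
    have "\<not> p dvd e"
      using False N by (auto simp: power2_eq_square)
    then have "coprime p e"
      using \<open>prime p\<close> prime_imp_coprime by blast
    moreover have "\<not> p dvd 3"
      using \<open>prime p\<close> \<open>p \<noteq> 3\<close> prime_nat_iff[of 3] prime_gt_1_nat[of p] by auto
    moreover have "\<not> e dvd 3"
    proof
      assume "e dvd 3"
      then have "e = 1 \<or> e = 3"
        using prime_nat_iff[of 3] by auto
      then show False
        using N assms(2,3) \<open>prime p\<close> by auto
    qed
    ultimately show ?thesis
      using N by blast
  qed
next
  case 2
  then show ?thesis
    by (intro disjI1 exI[of _ 3]) simp
qed

lemma positive_representation_nat_iff_int:
  fixes n :: nat
  shows "(\<exists>a b :: nat. a > 0 \<and> b > 0 \<and> a^2 + a*b + b^2 = n^2 + n + 1 \<and> (a, b) \<notin> {(n, 1), (1, n)})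
    \<longleftrightarrow> (\<exists>a b :: int. a > 0 \<and> b > 0 \<and> a^2 + a*b + b^2 = int n^2 + int n + 1
      \<and> (a, b) \<notin> {(int n, 1), (1, int n)})" (is "?nat \<longleftrightarrow> ?int")
proof
  assume ?nat
  then obtain a b :: nat
    where "a > 0" "b > 0" "a^2 + a*b + b^2 = n^2 + n + 1" "(a, b) \<notin> {(n, 1), (1, n)}"
    by blast
  then have "int a > 0 \<and> int b > 0 \<and> (int a)^2 + int a * int b + (int b)^2 = int n^2 + int n + 1
      \<and> (int a, int b) \<notin> {(int n, 1), (1, int n)}"
    by (auto simp flip: of_nat_power of_nat_mult of_nat_add)
  then show ?int
    by blast
next
  assume ?int
  then obtain a b :: int
    where "a > 0" "b > 0" "a^2 + a*b + b^2 = int n^2 + int n + 1" "(a, b) \<notin> {(int n, 1), (1, int n)}"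
    by blast
  moreover from this have "int ((nat a)^2 + nat a * nat b + (nat b)^2) = int (n^2 + n + 1)"
    by simp
  ultimately have "nat a > 0 \<and> nat b > 0 \<and> (nat a)^2 + nat a * nat b + (nat b)^2 = n^2 + n + 1
      \<and> (nat a, nat b) \<notin> {(n, 1), (1, n)}"
    unfolding of_nat_eq_iff by auto
  then show ?nat
    by blast
qed

lemma other_representation_if_not_prime_or_3_prime:
  fixes n :: nat
  assumes "n > 0" and "\<not> prime (n^2 + n + 1)" and "\<not> (\<exists>p. prime p \<and> n^2 + n + 1 = 3 * p)"
  shows "\<exists>a b :: int. a > 0 \<and> b > 0 \<and> a^2 + a*b + b^2 = int n^2 + int n + 1
    \<and> (a, b) \<notin> {(int n, 1), (1, int n)}"
proof -
  have n: "int n > 0"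
    using assms(1) by simp
  have "n^2 + n + 1 > 1"
    using assms(1) by simp
  then consider s where "s > 1" and "s^2 dvd n^2 + n + 1"
    | d e where "n^2 + n + 1 = d*e" and "coprime d e" and "\<not> d dvd 3" and "\<not> e dvd 3"
    using square_divisor_or_coprime_factors assms(2,3) by blast
  then show ?thesis
  proof cases
    case (1 s)
    then have "int s > 1" and "int (s^2) dvd int (n^2 + n + 1)"
      unfolding int_dvd_int_iff by simp_all
    then have "int s > 1" and "(int s)^2 dvd int n^2 + int n + 1"
      by (simp_all add: ac_simps)
    then show ?thesis
      using other_representation_of_square_divisor[OF n] by metis
  next
    case (2 d e)
    then have "int (n^2 + n + 1) = int d * int e" and "coprime (int d) (int e)"
      and "\<not> int d dvd int 3" and "\<not> int e dvd int 3"
      unfolding int_dvd_int_iff by simp_all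
    then have "int n^2 + int n + 1 = int d * int e" and "coprime (int d) (int e)"
      and "\<not> int d dvd 3" and "\<not> int e dvd 3"
      by (simp_all add: ac_simps)
    then show ?thesis
      using other_representation_of_coprime_factors[OF n] by metis
  qed
qed

theorem theorem4:
  fixes n :: nat
  assumes "n > 0"
  shows "(\<exists>a b :: nat. a > 0 \<and> b > 0 \<and> a^2 + a*b + b^2 = n^2 + n + 1
            \<and> (a, b) \<notin> {(n, 1), (1, n)})
         \<longleftrightarrow> \<not> prime (n^2 + n + 1) \<and> \<not> (\<exists>p. prime p \<and> n^2 + n + 1 = 3 * p)"
  unfolding positive_representation_nat_iff_int
proof
  assume "\<exists>a b :: int. a > 0 \<and> b > 0 \<and> a^2 + a*b + b^2 = int n^2 + int n + 1
    \<and> (a, b) \<notin> {(int n, 1), (1, int n)}"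
  then obtain a b :: int where ab: "a > 0" "b > 0" "a^2 + a*b + b^2 = int n^2 + int n + 1"
    and other: "(a, b) \<notin> {(int n, 1), (1, int n)}"
    by blast
  have "\<not> prime P" if "int n^2 + int n + 1 = m * P" and "m = 1 \<or> m = 3" for m P :: int
    using positive_representation_unique[OF _ ab that(1) _ that(2)] assms other by auto
  then show "\<not> prime (n^2 + n + 1) \<and> \<not> (\<exists>p. prime p \<and> n^2 + n + 1 = 3 * p)"
    by (metis (mono_tags) mult_1 of_nat_1 of_nat_add of_nat_mult of_nat_numeral of_nat_power
        prime_nat_int_transfer)
next
  assume "\<not> prime (n^2 + n + 1) \<and> \<not> (\<exists>p. prime p \<and> n^2 + n + 1 = 3 * p)"
  then show "\<exists>a b :: int. a > 0 \<and> b > 0 \<and> a^2 + a*b + b^2 = int n^2 + int n + 1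
    \<and> (a, b) \<notin> {(int n, 1), (1, int n)}"
    using other_representation_if_not_prime_or_3_prime assms by blast
qed

end
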